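(* Let $G$ be a graph on $n$ vertices with average degree $d$. Then for every $x>\lambda(G)$, \[ \chi_G(x)\le \frac{n(x+d)}{x^2-\lambda(G)^2}. \]
   Context: $\lambda(G)$ is the spectral radius of the adjacency matrix $A(G)$. For $x>\lambda(G)$, $\chi_G(x)=\mathbf{1}^{\mathrm T}(xI-A(G))^{-1}\mathbf{1}$ is the sum of all entries of $(xI-A(G))^{-1}$. The average degree is $d=2e(G)/n$. *)

theory Defs
  imports "HOL-Analysis.Analysis"
begin

text \<open>A finite simple graph on the vertex type 'n (n = CARD('n) vertices),
  given by a symmetric irreflexive adjacency relation.\<close>
definition simple_graph :: "('n::finite \<Rightarrow> 'n \<Rightarrow> bool) \<Rightarrow> bool" where
  "simple_graph E \<longleftrightarrow> (\<forall>u v. E u v \<longrightarrow> E v u) \<and> (\<forall>u. \<not> E u u)"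

definition edges :: "('n::finite \<Rightarrow> 'n \<Rightarrow> bool) \<Rightarrow> 'n set set" where
  "edges E = {{u, v} | u v. E u v}"

definition num_edges :: "('n::finite \<Rightarrow> 'n \<Rightarrow> bool) \<Rightarrow> nat" where
  "num_edges E = card (edges E)"

definition avg_degree :: "('n::finite \<Rightarrow> 'n \<Rightarrow> bool) \<Rightarrow> real" where
  "avg_degree E = 2 * real (num_edges E) / real CARD('n)"

definition adj_matrix :: "('n::finite \<Rightarrow> 'n \<Rightarrow> bool) \<Rightarrow> real^'n^'n" where
  "adj_matrix E = (\<chi> i j. if E i j then 1 else 0)"

text \<open>Eigenvalues of a real square matrix (real eigenvalues; adjacency matrices
  are symmetric, so all eigenvalues are real).\<close>
definition eigenvalues :: "real^'n^'n \<Rightarrow> real set" where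
  "eigenvalues A = {\<mu>. \<exists>v. v \<noteq> 0 \<and> A *v v = \<mu> *\<^sub>R v}"

definition spectral_radius :: "real^'n^'n \<Rightarrow> real" where
  "spectral_radius A = Max (abs ` eigenvalues A)"

definition lambda_G :: "('n::finite \<Rightarrow> 'n \<Rightarrow> bool) \<Rightarrow> real" where
  "lambda_G E = spectral_radius (adj_matrix E)"

text \<open>chi_G(x) = 1^T (xI - A(G))^{-1} 1, the sum of all entries of the inverse.\<close>
definition walk_gen :: "('n::finite \<Rightarrow> 'n \<Rightarrow> bool) \<Rightarrow> real \<Rightarrow> real" where
  "walk_gen E x = (let M = matrix_inv (x *\<^sub>R mat 1 - adj_matrix E) in
      \<Sum>i\<in>UNIV. \<Sum>j\<in>UNIV. M $ i $ j)"

end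

theory Submission
  imports Defs
begin

(*
  Let A be the adjacency matrix, \<lambda> its spectral radius, 1 the all-ones vector and
  u = (xI - A)\<^sup>-\<^sup>1 1, so that \<chi>(x) = 1 \<bullet> u and n (x + d) = 1 \<bullet> (xI + A) 1.
  Substituting 1 = (xI - A) u, the difference n (x + d) - (x\<^sup>2 - \<lambda>\<^sup>2) \<chi>(x) becomes the
  quadratic form at u of
    (\<lambda>\<^sup>2 I - A\<^sup>2)(xI - A) = (x - \<lambda>)(\<lambda>\<^sup>2 I - A\<^sup>2) + (\<lambda>I - A)\<^sup>2 (\<lambda>I + A),
  and both terms are nonnegative: by the Rayleigh principle for the symmetric matrices -A
  and A\<^sup>2, we have w \<bullet> A w \<ge> -\<lambda> |w|\<^sup>2 and |A w|\<^sup>2 \<le> \<lambda>\<^sup>2 |w|\<^sup>2.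
*)

lemma symmetric_matrix_inner_commute:
  fixes A :: "real^'n^'n"
  assumes "transpose A = A"
  shows "x \<bullet> (A *v y) = (A *v x) \<bullet> y"
  by (metis assms dot_lmul_matrix transpose_matrix_vector)

lemma scaleR_mat_1_mult_vector: "((c::real) *\<^sub>R mat 1) *v (v::real^'n) = c *\<^sub>R v"
proof -
  have "(c *\<^sub>R mat 1) *v v = c *\<^sub>R (mat 1 *v v)"
    by (rule scaleR_matrix_vector_assoc[symmetric])
  then show ?thesis by simp
qed

lemma matrix_vector_mult_uminus: "(- (A::real^'n^'m)) *v x = - (A *v x)"
  by (simp add: vec_eq_iff matrix_vector_mult_def sum_negf)

lemma linear_coeff_zero_if_quadratic_nonneg:
  fixes a b :: real
  assumes nonneg: "\<And>t. 0 \<le> 2 * t * a + t * t * b" and "a \<ge> 0"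
  shows "a = 0"
proof (rule ccontr)
  assume "a \<noteq> 0"
  with \<open>a \<ge> 0\<close> have a: "a > 0" by simp
  show False
  proof (cases "b \<le> 0")
    case True
    then show False using nonneg[of "-1"] a by simp
  next
    case False
    have "2 * (-a/b) * a + (-a/b) * (-a/b) * b = - (a * a / b)"
      using False by (simp add: field_simps)
    moreover have "a * a / b > 0" using False a by simp
    ultimately show False using nonneg[of "-a/b"] by linarith
  qed
qed

lemma psd_symmetric_form_zero_imp_kernel:
  fixes C :: "real^'n^'n"
  assumes sym: "transpose C = C"
    and psd: "\<And>w. 0 \<le> w \<bullet> (C *v w)"
    and "v \<bullet> (C *v v) = 0"
  shows "C *v v = 0"
proof -
  define r where "r = C *v v"
  have vr: "v \<bullet> (C *v r) = r \<bullet> r"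
    using symmetric_matrix_inner_commute[OF sym, of v r] by (simp add: r_def)
  have "0 \<le> 2 * t * (r \<bullet> r) + t * t * (r \<bullet> (C *v r))" for t
  proof -
    have "(v + t *\<^sub>R r) \<bullet> (C *v (v + t *\<^sub>R r))
        = v \<bullet> (C *v v) + t * (v \<bullet> (C *v r)) + t * (r \<bullet> (C *v v)) + t * t * (r \<bullet> (C *v r))"
      by (simp add: algebra_simps)
    also have "\<dots> = 2 * t * (r \<bullet> r) + t * t * (r \<bullet> (C *v r))"
      using \<open>v \<bullet> (C *v v) = 0\<close> vr by (simp add: r_def[symmetric])
    finally show ?thesis using psd[of "v + t *\<^sub>R r"] by simp
  qed
  then have "r \<bullet> r = 0"
    by (intro linear_coeff_zero_if_quadratic_nonneg) auto
  then show ?thesis unfolding r_def by simp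
qed

lemma symmetric_matrix_max_rayleigh_eigenvector:
  fixes B :: "real^'n^'n"
  assumes sym: "transpose B = B"
  obtains v \<mu> where "v \<noteq> 0" "B *v v = \<mu> *\<^sub>R v" "\<And>w. w \<bullet> (B *v w) \<le> \<mu> * (w \<bullet> w)"
proof -
  define q where "q w = w \<bullet> (B *v w)" for w
  define S where "S = sphere (0::real^'n) 1"
  have "continuous_on S q" unfolding q_def
    by (intro continuous_intros linear_continuous_on matrix_vector_mul_linear)
  then have "compact (q ` S)"
    unfolding S_def by (intro compact_continuous_image compact_sphere)
  moreover have "axis undefined 1 \<in> S"
    unfolding S_def by simp
  ultimately obtain m where "m \<in> q ` S" and m_max: "\<forall>t \<in> q ` S. t \<le> m"
    using compact_attains_sup[of "q ` S"] by blast
  then obtain v where "v \<in> S" "q v = m" by blast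
  then have v: "norm v = 1" "q v = m" unfolding S_def by simp_all
  have bound: "q w \<le> m * (w \<bullet> w)" for w
  proof (cases "w = 0")
    case True
    then show ?thesis by (simp add: q_def)
  next
    case False
    define c where "c = inverse (norm w)"
    have c: "c > 0" "c * c * (w \<bullet> w) = 1"
      using False by (simp_all add: c_def dot_square_norm power2_eq_square field_simps)
    have "c *\<^sub>R w \<in> S"
      using False by (simp add: S_def c_def)
    then have "q (c *\<^sub>R w) \<le> m" using m_max by blast
    moreover have "q (c *\<^sub>R w) = c * c * q w"
      by (simp add: q_def matrix_vector_mult_scaleR)
    ultimately have "c * c * q w \<le> c * c * (m * (w \<bullet> w))"
      using c(2) by (simp add: algebra_simps)
    then show ?thesis using c(1) by simp
  qed
  define C where "C = m *\<^sub>R mat 1 - B"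
  have Cw: "C *v w = m *\<^sub>R w - B *v w" for w
    by (simp add: C_def matrix_vector_mult_diff_rdistrib scaleR_mat_1_mult_vector)
  have "transpose C = C"
    using sym by (simp add: C_def transpose_def vec_eq_iff mat_def)
  moreover have "0 \<le> w \<bullet> (C *v w)" for w
    using bound[of w] by (simp add: Cw q_def inner_diff_right)
  moreover have "v \<bullet> (C *v v) = 0"
    using v by (simp add: Cw q_def inner_diff_right dot_square_norm)
  ultimately have "C *v v = 0" by (rule psd_symmetric_form_zero_imp_kernel)
  then have "B *v v = m *\<^sub>R v" by (simp add: Cw)
  moreover have "v \<noteq> 0" using v by auto
  ultimately show ?thesis using that bound unfolding q_def by blast
qed

lemma finite_eigenvalues_symmetric:
  fixes A :: "real^'n^'n"
  assumes sym: "transpose A = A"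
  shows "finite (eigenvalues A)"
proof -
  define eigvec where "eigvec \<mu> = (SOME v. v \<noteq> 0 \<and> A *v v = \<mu> *\<^sub>R v)" for \<mu>
  have eigvec: "eigvec \<mu> \<noteq> 0" "A *v eigvec \<mu> = \<mu> *\<^sub>R eigvec \<mu>"
    if "\<mu> \<in> eigenvalues A" for \<mu>
    using someI_ex[of "\<lambda>v. v \<noteq> 0 \<and> A *v v = \<mu> *\<^sub>R v"] that
    unfolding eigvec_def eigenvalues_def by auto
  have inj: "inj_on eigvec (eigenvalues A)"
  proof (rule inj_onI)
    fix a b assume a: "a \<in> eigenvalues A" and b: "b \<in> eigenvalues A" and "eigvec a = eigvec b"
    then have "a *\<^sub>R eigvec a = b *\<^sub>R eigvec a" using eigvec by metis
    then show "a = b" using eigvec(1)[OF a] by simp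
  qed
  have "pairwise orthogonal (eigvec ` eigenvalues A)"
  proof (clarsimp simp: pairwise_def)
    fix a b assume a: "a \<in> eigenvalues A" and b: "b \<in> eigenvalues A" and "eigvec a \<noteq> eigvec b"
    then have "a \<noteq> b" by blast
    have "a * (eigvec a \<bullet> eigvec b) = (A *v eigvec a) \<bullet> eigvec b"
      using eigvec(2)[OF a] by simp
    also have "\<dots> = eigvec a \<bullet> (A *v eigvec b)"
      using symmetric_matrix_inner_commute[OF sym] by simp
    also have "\<dots> = b * (eigvec a \<bullet> eigvec b)"
      using eigvec(2)[OF b] by simp
    finally show "orthogonal (eigvec a) (eigvec b)"
      using \<open>a \<noteq> b\<close> unfolding orthogonal_def by simp
  qed
  moreover have "0 \<notin> eigvec ` eigenvalues A" using eigvec by auto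
  ultimately have "independent (eigvec ` eigenvalues A)"
    by (rule pairwise_orthogonal_independent)
  then have "finite (eigvec ` eigenvalues A)" by (rule independent_bound[THEN conjunct1])
  then show ?thesis using inj finite_imageD by blast
qed

lemma abs_eigenvalue_le_spectral_radius:
  fixes A :: "real^'n^'n"
  assumes "transpose A = A" and "\<mu> \<in> eigenvalues A"
  shows "\<bar>\<mu>\<bar> \<le> spectral_radius A"
  unfolding spectral_radius_def
  using assms by (intro Max_ge) (simp_all add: finite_eigenvalues_symmetric)

lemma eigenvalue_of_square_eigenvalue:
  fixes A :: "real^'n^'n"
  assumes "u \<noteq> 0" and "(A ** A) *v u = (s * s) *\<^sub>R u"
  shows "s \<in> eigenvalues A \<or> - s \<in> eigenvalues A"
proof (cases "A *v u + s *\<^sub>R u = 0")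
  case True
  then have "A *v u = (- s) *\<^sub>R u" by (simp add: eq_neg_iff_add_eq_0)
  then show ?thesis using assms(1) unfolding eigenvalues_def by blast
next
  case False
  have "A *v (A *v u + s *\<^sub>R u) = s *\<^sub>R (A *v u + s *\<^sub>R u)"
    using assms(2) by (simp add: matrix_vector_mul_assoc matrix_vector_right_distrib
        matrix_vector_mult_scaleR scaleR_add_right)
  then show ?thesis using False unfolding eigenvalues_def by blast
qed

lemma spectral_radius_nonneg:
  fixes A :: "real^'n^'n"
  assumes "transpose A = A"
  shows "0 \<le> spectral_radius A"
proof -
  obtain v \<mu> where "v \<noteq> 0" "A *v v = \<mu> *\<^sub>R v"
    using symmetric_matrix_max_rayleigh_eigenvector[OF assms] .
  then have "\<mu> \<in> eigenvalues A" unfolding eigenvalues_def by blast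
  then show ?thesis using abs_eigenvalue_le_spectral_radius[OF assms] by fastforce
qed

lemma neg_spectral_radius_le_inner_matrix_vector:
  fixes A :: "real^'n^'n"
  assumes sym: "transpose A = A"
  shows "- spectral_radius A * (w \<bullet> w) \<le> w \<bullet> (A *v w)"
proof -
  have "transpose (- A) = - A" using sym by (simp add: transpose_def vec_eq_iff)
  then obtain v \<mu> where v: "v \<noteq> 0" "(- A) *v v = \<mu> *\<^sub>R v"
    and max: "\<And>w. w \<bullet> ((- A) *v w) \<le> \<mu> * (w \<bullet> w)"
    using symmetric_matrix_max_rayleigh_eigenvector by blast
  from v(2) have "A *v v = (- \<mu>) *\<^sub>R v"
    unfolding matrix_vector_mult_uminus by (simp add: minus_equation_iff[of "A *v v"])
  with v(1) have "- \<mu> \<in> eigenvalues A" unfolding eigenvalues_def by blast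
  then have "\<bar>- \<mu>\<bar> \<le> spectral_radius A" by (rule abs_eigenvalue_le_spectral_radius[OF sym])
  then have "\<mu> \<le> spectral_radius A" by simp
  then have "\<mu> * (w \<bullet> w) \<le> spectral_radius A * (w \<bullet> w)" by (simp add: mult_right_mono)
  then show ?thesis using max[of w] by (simp add: matrix_vector_mult_uminus)
qed

lemma inner_matrix_vector_self_le_spectral_radius:
  fixes A :: "real^'n^'n"
  assumes sym: "transpose A = A"
  shows "(A *v w) \<bullet> (A *v w) \<le> (spectral_radius A)\<^sup>2 * (w \<bullet> w)"
proof -
  have square_form: "w \<bullet> ((A ** A) *v w) = (A *v w) \<bullet> (A *v w)" for w
    using symmetric_matrix_inner_commute[OF sym, of w "A *v w"]
    by (simp add: matrix_vector_mul_assoc)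
  have "transpose (A ** A) = A ** A" using sym by (simp add: matrix_transpose_mul)
  then obtain u \<nu> where u: "u \<noteq> 0" "(A ** A) *v u = \<nu> *\<^sub>R u"
    and max: "\<And>w. w \<bullet> ((A ** A) *v w) \<le> \<nu> * (w \<bullet> w)"
    using symmetric_matrix_max_rayleigh_eigenvector by blast
  have "\<nu> * (u \<bullet> u) \<ge> 0" using square_form[of u] u(2) by simp
  moreover have "u \<bullet> u > 0" using u(1) by simp
  ultimately have "\<nu> \<ge> 0" by (simp add: zero_le_mult_iff)
  define s where "s = sqrt \<nu>"
  have "s \<ge> 0" "s * s = \<nu>" using \<open>\<nu> \<ge> 0\<close> by (simp_all add: s_def)
  then have "s \<in> eigenvalues A \<or> - s \<in> eigenvalues A"
    using u by (intro eigenvalue_of_square_eigenvalue) simp_all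
  then have "\<bar>s\<bar> \<le> spectral_radius A"
    using abs_eigenvalue_le_spectral_radius[OF sym] by force
  then have "s * s \<le> spectral_radius A * spectral_radius A"
    using \<open>s \<ge> 0\<close> by (intro mult_mono) simp_all
  then have "\<nu> \<le> (spectral_radius A)\<^sup>2"
    using \<open>s * s = \<nu>\<close> by (simp add: power2_eq_square)
  then have "\<nu> * (w \<bullet> w) \<le> (spectral_radius A)\<^sup>2 * (w \<bullet> w)" by (simp add: mult_right_mono)
  then show ?thesis using max[of w] square_form[of w] by simp
qed

lemma resolvent_quadratic_form_bound:
  fixes A :: "real^'n^'n" and u :: "real^'n"
  assumes sym: "transpose A = A" and x: "spectral_radius A \<le> x"
  defines "y \<equiv> x *\<^sub>R u - A *v u"
  shows "(x\<^sup>2 - (spectral_radius A)\<^sup>2) * (y \<bullet> u) \<le> x * (y \<bullet> y) + y \<bullet> (A *v y)"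
proof -
  define L where "L = spectral_radius A"
  define w where "w = L *\<^sub>R u - A *v u"
  have "u \<bullet> (A *v (A *v u)) = (A *v u) \<bullet> (A *v u)"
    using symmetric_matrix_inner_commute[OF sym] by simp
  then have "x * (y \<bullet> y) + y \<bullet> (A *v y) - (x\<^sup>2 - L\<^sup>2) * (y \<bullet> u)
      = (x - L) * (L\<^sup>2 * (u \<bullet> u) - (A *v u) \<bullet> (A *v u)) + (L * (w \<bullet> w) + w \<bullet> (A *v w))"
    unfolding y_def w_def
    by (simp add: inner_diff_left inner_diff_right inner_commute power2_eq_square algebra_simps)
  moreover have "0 \<le> (x - L) * (L\<^sup>2 * (u \<bullet> u) - (A *v u) \<bullet> (A *v u))"
    using x inner_matrix_vector_self_le_spectral_radius[OF sym, of u] by (simp add: L_def)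
  moreover have "0 \<le> L * (w \<bullet> w) + w \<bullet> (A *v w)"
    using neg_spectral_radius_le_inner_matrix_vector[OF sym, of w] by (simp add: L_def)
  ultimately show ?thesis unfolding L_def by linarith
qed

lemma invertible_scaleR_mat_1_minus:
  fixes A :: "real^'n^'n"
  assumes "x \<notin> eigenvalues A"
  shows "invertible (x *\<^sub>R mat 1 - A)"
proof -
  have "(x *\<^sub>R mat 1 - A) *v v = 0 \<Longrightarrow> v = 0" for v
    using assms unfolding eigenvalues_def
    by (auto simp: matrix_vector_mult_diff_rdistrib scaleR_mat_1_mult_vector)
  then show ?thesis using invertible_left_inverse matrix_left_invertible_ker by blast
qed

lemma matrix_inv_right:
  fixes A :: "'a::semiring_1^'n^'m"
  assumes "invertible A"
  shows "A ** matrix_inv A = mat 1"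
  using someI_ex[OF assms[unfolded invertible_def]] unfolding matrix_inv_def by blast

lemma adj_matrix_symmetric:
  assumes "simple_graph E"
  shows "transpose (adj_matrix E) = adj_matrix E"
  using assms unfolding adj_matrix_def transpose_def simple_graph_def by (auto simp: vec_eq_iff)

lemma card_adjacent_pairs:
  fixes E :: "'n::finite \<Rightarrow> 'n \<Rightarrow> bool"
  assumes g: "simple_graph E"
  shows "card {(i, j). E i j} = 2 * num_edges E"
proof -
  define P where "P = {(i, j). E i j}"
  define f where "f = (\<lambda>(i::'n, j). {i, j})"
  have edges: "edges E = f ` P" unfolding edges_def f_def P_def by auto
  have fibre: "card {p \<in> P. f p = e} = 2" if e: "e \<in> f ` P" for e
  proof -
    obtain a b where ab: "E a b" "e = {a, b}" using e unfolding P_def f_def by fastforce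
    then have "a \<noteq> b" using g unfolding simple_graph_def by auto
    have "{p \<in> P. f p = e} = {(a, b), (b, a)}"
      using ab g unfolding P_def f_def simple_graph_def by (auto simp: doubleton_eq_iff)
    then show ?thesis using \<open>a \<noteq> b\<close> by simp
  qed
  have "card P = (\<Sum>p\<in>P. 1)" by simp
  also have "\<dots> = (\<Sum>e\<in>f ` P. \<Sum>p\<in>{p \<in> P. f p = e}. 1)"
    by (rule sum.image_gen) simp
  also have "\<dots> = (\<Sum>e\<in>f ` P. 2)" using fibre by (intro sum.cong) auto
  also have "\<dots> = 2 * card (f ` P)" by simp
  finally show ?thesis using edges unfolding num_edges_def P_def by simp
qed

lemma inner_ones_adj_matrix_ones:
  fixes E :: "'n::finite \<Rightarrow> 'n \<Rightarrow> bool"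
  assumes "simple_graph E"
  shows "(\<chi> i. 1) \<bullet> (adj_matrix E *v (\<chi> i. 1)) = 2 * real (num_edges E)"
proof -
  have "(\<chi> i. 1) \<bullet> (adj_matrix E *v (\<chi> i. 1))
      = (\<Sum>i\<in>UNIV. \<Sum>j\<in>UNIV. if E i j then 1 else (0::real))"
    unfolding adj_matrix_def by (simp add: inner_vec_def matrix_vector_mult_def)
  also have "\<dots> = (\<Sum>(i, j)\<in>UNIV. if E i j then 1 else 0)"
    unfolding UNIV_Times_UNIV[symmetric] by (rule sum.cartesian_product)
  also have "\<dots> = (\<Sum>p\<in>{p. E (fst p) (snd p)}. 1)"
    by (simp add: sum.inter_filter[symmetric] case_prod_beta)
  also have "{p. E (fst p) (snd p)} = {(i, j). E i j}" by auto
  also have "(\<Sum>p\<in>{(i, j). E i j}. 1) = real (card {(i, j). E i j})" by simp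
  finally show ?thesis using card_adjacent_pairs[OF assms] by simp
qed

lemma walk_gen_eq_inner:
  "walk_gen E x = (\<chi> i. 1) \<bullet> (matrix_inv (x *\<^sub>R mat 1 - adj_matrix E) *v (\<chi> i. 1))"
  unfolding walk_gen_def Let_def by (simp add: inner_vec_def matrix_vector_mult_def)

theorem lemma3p3:
  fixes E :: "'n::finite \<Rightarrow> 'n \<Rightarrow> bool" and x :: real
  assumes "simple_graph E"
    and "x > lambda_G E"
  shows "walk_gen E x \<le>
    real CARD('n) * (x + avg_degree E) / (x\<^sup>2 - (lambda_G E)\<^sup>2)"
proof -
  define A where "A = adj_matrix E"
  define ones :: "real^'n" where "ones = (\<chi> i. 1)"
  define u where "u = matrix_inv (x *\<^sub>R mat 1 - A) *v ones"
  have sym: "transpose A = A"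
    unfolding A_def using assms(1) by (rule adj_matrix_symmetric)
  have L: "lambda_G E = spectral_radius A" by (simp add: lambda_G_def A_def)
  have "x \<notin> eigenvalues A"
    using abs_eigenvalue_le_spectral_radius[OF sym] assms(2) L by force
  then have "(x *\<^sub>R mat 1 - A) ** matrix_inv (x *\<^sub>R mat 1 - A) = mat 1"
    by (intro matrix_inv_right invertible_scaleR_mat_1_minus)
  then have "(x *\<^sub>R mat 1 - A) *v u = ones"
    unfolding u_def matrix_vector_mul_assoc by simp
  then have "x *\<^sub>R u - A *v u = ones"
    by (simp add: matrix_vector_mult_diff_rdistrib scaleR_mat_1_mult_vector)
  then have "(x\<^sup>2 - (lambda_G E)\<^sup>2) * walk_gen E x \<le> x * (ones \<bullet> ones) + ones \<bullet> (A *v ones)"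
    using resolvent_quadratic_form_bound[OF sym, of x u] assms(2) L
    by (simp add: walk_gen_eq_inner ones_def u_def A_def)
  also have "\<dots> = real CARD('n) * (x + avg_degree E)"
    using inner_ones_adj_matrix_ones[OF assms(1)]
    by (simp add: ones_def A_def inner_vec_def avg_degree_def field_simps)
  finally show ?thesis
    using spectral_radius_nonneg[OF sym] assms(2) L
    by (simp add: pos_le_divide_eq mult.commute power_strict_mono)
qed

end
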